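(* Let $\alpha,\alpha'$ be probability distributions on $[d]$, $n\ge1$, $\lambda\sim\mathrm{SW}^n(\alpha)$, $\lambda'\sim\mathrm{SW}^n(\alpha')$, and $\underline\lambda=\lambda/n$, $\underline\lambda'=\lambda'/n$. Then for every $k\in[d]$, \[ \big|\mathbb E[\underline\lambda_1+\cdots+\underline\lambda_k]-\mathbb E[\underline\lambda'_1+\cdots+\underline\lambda'_k]\big|\le d_{TV}(\alpha,\alpha'),\qquad \big|\mathbb E[\underline\lambda_k]-\mathbb E[\underline\lambda'_k]\big|\le 2\,d_{TV}(\alpha,\alpha'). \]
   Context: $d_{TV}(\alpha,\alpha')=\tfrac12\sum_i|\alpha_i-\alpha'_i|$. $\mathrm{SW}^n(\alpha)$ is the law of the RSK shape $\mathrm{shRSK}(\boldsymbol w)$ (Young diagram whose first $k$ rows sum to the maximum total length of $k$ disjoint weakly increasing subsequences of $\boldsymbol w$), where $\boldsymbol w\in[d]^n$ has i.i.d. letters with law $\alpha$. *)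

theory Defs
  imports "HOL-Analysis.Analysis"
begin

definition prob_dist :: "nat \<Rightarrow> (nat \<Rightarrow> real) \<Rightarrow> bool" where
  "prob_dist d \<alpha> \<longleftrightarrow> (\<forall>i\<in>{1..d}. 0 \<le> \<alpha> i) \<and> (\<Sum>i=1..d. \<alpha> i) = 1"

definition d_TV :: "nat \<Rightarrow> (nat \<Rightarrow> real) \<Rightarrow> (nat \<Rightarrow> real) \<Rightarrow> real" where
  "d_TV d \<alpha> \<beta> = (1/2) * (\<Sum>i=1..d. \<bar>\<alpha> i - \<beta> i\<bar>)"

definition words :: "nat \<Rightarrow> nat \<Rightarrow> nat list set" where
  "words d n = {w. length w = n \<and> set w \<subseteq> {1..d}}"

definition word_prob :: "(nat \<Rightarrow> real) \<Rightarrow> nat list \<Rightarrow> real" where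
  "word_prob \<alpha> w = (\<Prod>i<length w. \<alpha> (w ! i))"

definition incr_set :: "nat list \<Rightarrow> nat set \<Rightarrow> bool" where
  "incr_set w I \<longleftrightarrow> I \<subseteq> {..<length w} \<and> (\<forall>i\<in>I. \<forall>j\<in>I. i < j \<longrightarrow> w ! i \<le> w ! j)"

text \<open>Maximum total length of k disjoint weakly increasing subsequences of w
  (= sum of the first k rows of the RSK shape).\<close>
definition greene :: "nat list \<Rightarrow> nat \<Rightarrow> nat" where
  "greene w k = Max {card (\<Union>i<k. F i) | F.
      (\<forall>i<k. incr_set w (F i)) \<and> (\<forall>i<k. \<forall>j<k. i \<noteq> j \<longrightarrow> F i \<inter> F j = {})}"

definition shRSK :: "nat list \<Rightarrow> nat \<Rightarrow> nat" where
  "shRSK w k = greene w k - greene w (k - 1)"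

text \<open>Expectation of f(lambda) for lambda ~ SW^n(alpha), i.e. over words w of
  length n with i.i.d. letters of law alpha, of f applied to the word.\<close>
definition E_SW :: "nat \<Rightarrow> nat \<Rightarrow> (nat \<Rightarrow> real) \<Rightarrow> (nat list \<Rightarrow> real) \<Rightarrow> real" where
  "E_SW d n \<alpha> f = (\<Sum>w\<in>words d n. word_prob \<alpha> w * f w)"

end

theory Submission
  imports Defs
begin

text \<open>Changing one letter of a word changes the maximal total length of k disjoint weakly
  increasing subsequences by at most one (delete the changed position from an optimal family),
  so lambda_1 + ... + lambda_k has bounded differences 1 and lambda_k bounded differences 2.
  For a function with bounded differences c, the expectations under two product measures differ
  by at most n c d_TV: replace the letters one at a time, and at each step the difference is
  the integral of a function of oscillation at most c against alpha - alpha', which is bounded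
  by c d_TV after centring the function at the midpoint of its range.\<close>

lemma words_0: "words d 0 = {[]}"
  by (auto simp: words_def)

lemma words_Suc: "words d (Suc n) = (\<lambda>(a, w). a # w) ` ({1..d} \<times> words d n)"
  by (auto simp: words_def image_iff length_Suc_conv)

lemma Cons_in_words: "a \<in> {1..d} \<Longrightarrow> w \<in> words d n \<Longrightarrow> a # w \<in> words d (Suc n)"
  by (auto simp: words_def)

lemma word_prob_Cons: "word_prob \<alpha> (a # w) = \<alpha> a * word_prob \<alpha> w"
  unfolding word_prob_def by (simp only: length_Cons prod.lessThan_Suc_shift) simp

lemma word_prob_nonneg:
  assumes "prob_dist d \<alpha>" "w \<in> words d n"
  shows "0 \<le> word_prob \<alpha> w"
  using assms unfolding word_prob_def prob_dist_def words_def
  by (auto intro!: prod_nonneg) (meson nth_mem subsetD)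

lemma E_SW_0: "E_SW d 0 \<alpha> f = f []"
  by (simp add: E_SW_def words_0 word_prob_def)

lemma E_SW_Suc: "E_SW d (Suc n) \<alpha> f = (\<Sum>a=1..d. \<alpha> a * E_SW d n \<alpha> (\<lambda>w. f (a # w)))"
proof -
  have "inj_on (\<lambda>(a, w). a # w) ({1..d} \<times> words d n)"
    by (auto simp: inj_on_def)
  then have "E_SW d (Suc n) \<alpha> f = (\<Sum>(a, w)\<in>{1..d} \<times> words d n. word_prob \<alpha> (a # w) * f (a # w))"
    unfolding E_SW_def words_Suc by (subst sum.reindex) (simp_all add: case_prod_beta)
  also have "\<dots> = (\<Sum>a=1..d. \<alpha> a * E_SW d n \<alpha> (\<lambda>w. f (a # w)))"
    by (simp add: sum.cartesian_product[symmetric] E_SW_def word_prob_Cons sum_distrib_left mult.assoc)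
  finally show ?thesis .
qed

lemma E_SW_const:
  assumes "prob_dist d \<alpha>"
  shows "E_SW d n \<alpha> (\<lambda>_. c) = c"
  using assms by (induction n) (simp_all add: E_SW_0 E_SW_Suc prob_dist_def flip: sum_distrib_right)

lemma abs_convex_sum_le:
  assumes "prob_dist d \<alpha>" and "\<And>a. a \<in> {1..d} \<Longrightarrow> \<bar>g a\<bar> \<le> c"
  shows "\<bar>\<Sum>a=1..d. \<alpha> a * g a\<bar> \<le> c"
proof -
  have "\<bar>\<Sum>a=1..d. \<alpha> a * g a\<bar> \<le> (\<Sum>a=1..d. \<alpha> a * c)"
    using assms by (intro order_trans[OF sum_abs] sum_mono)
      (auto simp: prob_dist_def abs_mult intro: mult_left_mono)
  also have "\<dots> = c"
    using assms(1) by (simp add: prob_dist_def flip: sum_distrib_right)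
  finally show ?thesis .
qed

lemma abs_E_SW_le:
  assumes "prob_dist d \<alpha>" and "\<And>w. w \<in> words d n \<Longrightarrow> \<bar>f w\<bar> \<le> c"
  shows "\<bar>E_SW d n \<alpha> f\<bar> \<le> c"
proof -
  have "\<bar>E_SW d n \<alpha> f\<bar> \<le> (\<Sum>w\<in>words d n. word_prob \<alpha> w * c)"
    unfolding E_SW_def using assms word_prob_nonneg[OF assms(1)]
    by (intro order_trans[OF sum_abs] sum_mono) (auto simp: abs_mult intro: mult_left_mono)
  also have "\<dots> = c"
    using E_SW_const[OF assms(1), of n 1] by (simp add: E_SW_def flip: sum_distrib_right)
  finally show ?thesis .
qed

lemma abs_sum_diff_mult_le_d_TV:
  fixes g :: "nat \<Rightarrow> real"
  assumes "prob_dist d \<alpha>" "prob_dist d \<alpha>'"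
    and osc: "\<And>a b. a \<in> {1..d} \<Longrightarrow> b \<in> {1..d} \<Longrightarrow> \<bar>g a - g b\<bar> \<le> c"
  shows "\<bar>\<Sum>a=1..d. (\<alpha> a - \<alpha>' a) * g a\<bar> \<le> c * d_TV d \<alpha> \<alpha>'"
proof (cases "d = 0")
  case True
  then show ?thesis using assms(1) by (simp add: prob_dist_def)
next
  case False
  have fin: "finite (g ` {1..d})" and ne: "g ` {1..d} \<noteq> {}"
    using False by auto
  define mid where "mid = (Max (g ` {1..d}) + Min (g ` {1..d})) / 2"
  have range: "Max (g ` {1..d}) - Min (g ` {1..d}) \<le> c"
    using Max_in[OF fin ne] Min_in[OF fin ne] osc by (force simp: abs_le_iff)
  have centred: "\<bar>g a - mid\<bar> \<le> c / 2" if "a \<in> {1..d}" for a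
  proof -
    have "Min (g ` {1..d}) \<le> g a" "g a \<le> Max (g ` {1..d})"
      using that fin by auto
    then show ?thesis using range unfolding mid_def abs_le_iff by (auto simp: field_simps)
  qed
  have "(\<Sum>a=1..d. (\<alpha> a - \<alpha>' a) * g a) = (\<Sum>a=1..d. (\<alpha> a - \<alpha>' a) * (g a - mid))"
    using assms(1,2) by (simp add: prob_dist_def right_diff_distrib sum_subtractf
        flip: sum_distrib_right)
  also have "\<bar>\<dots>\<bar> \<le> (\<Sum>a=1..d. \<bar>\<alpha> a - \<alpha>' a\<bar> * (c / 2))"
  proof (rule order_trans[OF sum_abs], rule sum_mono)
    fix a assume "a \<in> {1..d}"
    then show "\<bar>(\<alpha> a - \<alpha>' a) * (g a - mid)\<bar> \<le> \<bar>\<alpha> a - \<alpha>' a\<bar> * (c / 2)"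
      unfolding abs_mult by (intro mult_left_mono centred) auto
  qed
  also have "\<dots> = c * d_TV d \<alpha> \<alpha>'"
    unfolding d_TV_def sum_distrib_left sum_distrib_right by (intro sum.cong) auto
  finally show ?thesis .
qed

definition bounded_differences :: "nat \<Rightarrow> nat \<Rightarrow> (nat list \<Rightarrow> real) \<Rightarrow> real \<Rightarrow> bool" where
  "bounded_differences d n f c \<longleftrightarrow>
     (\<forall>w\<in>words d n. \<forall>j<n. \<forall>b\<in>{1..d}. \<bar>f w - f (w[j := b])\<bar> \<le> c)"

lemma bounded_differences_divide:
  assumes "bounded_differences d n f c" "r > 0"
  shows "bounded_differences d n (\<lambda>w. f w / r) (c / r)"
  using assms by (auto simp: bounded_differences_def abs_divide divide_right_mono
      simp flip: diff_divide_distrib)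

lemma bounded_differences_Cons:
  assumes "bounded_differences d (Suc n) f c" "a \<in> {1..d}"
  shows "bounded_differences d n (\<lambda>w. f (a # w)) c"
  unfolding bounded_differences_def
proof (intro ballI allI impI)
  fix w j b assume "w \<in> words d n" "j < n" "b \<in> {1..d}"
  then have "\<bar>f (a # w) - f ((a # w)[Suc j := b])\<bar> \<le> c"
    using assms Cons_in_words unfolding bounded_differences_def by blast
  then show "\<bar>f (a # w) - f (a # w[j := b])\<bar> \<le> c" by simp
qed

lemma bounded_differences_head:
  assumes "prob_dist d \<beta>" "bounded_differences d (Suc n) f c" "a \<in> {1..d}" "b \<in> {1..d}"
  shows "\<bar>E_SW d n \<beta> (\<lambda>w. f (a # w)) - E_SW d n \<beta> (\<lambda>w. f (b # w))\<bar> \<le> c"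
proof -
  have "E_SW d n \<beta> (\<lambda>w. f (a # w)) - E_SW d n \<beta> (\<lambda>w. f (b # w))
      = E_SW d n \<beta> (\<lambda>w. f (a # w) - f ((a # w)[0 := b]))"
    by (simp add: E_SW_def right_diff_distrib sum_subtractf)
  also have "\<bar>\<dots>\<bar> \<le> c"
    using assms Cons_in_words unfolding bounded_differences_def
    by (intro abs_E_SW_le) blast+
  finally show ?thesis .
qed

lemma E_SW_diff_le_bounded_differences:
  assumes pd: "prob_dist d \<alpha>" "prob_dist d \<alpha>'" and "bounded_differences d n f c"
  shows "\<bar>E_SW d n \<alpha> f - E_SW d n \<alpha>' f\<bar> \<le> real n * c * d_TV d \<alpha> \<alpha>'"
  using assms(3)
proof (induction n arbitrary: f)
  case 0
  then show ?case by (simp add: E_SW_0)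
next
  case (Suc n)
  define D where "D = d_TV d \<alpha> \<alpha>'"
  define g where "g a = E_SW d n \<alpha>' (\<lambda>w. f (a # w))" for a
  have "E_SW d (Suc n) \<alpha> f - E_SW d (Suc n) \<alpha>' f
      = (\<Sum>a=1..d. \<alpha> a * (E_SW d n \<alpha> (\<lambda>w. f (a # w)) - g a)) + (\<Sum>a=1..d. (\<alpha> a - \<alpha>' a) * g a)"
    by (simp add: E_SW_Suc g_def algebra_simps sum.distrib sum_subtractf)
  also have "\<bar>\<dots>\<bar> \<le> real n * c * D + c * D"
  proof (rule order_trans[OF abs_triangle_ineq add_mono])
    show "\<bar>\<Sum>a=1..d. \<alpha> a * (E_SW d n \<alpha> (\<lambda>w. f (a # w)) - g a)\<bar> \<le> real n * c * D"
      using Suc bounded_differences_Cons unfolding g_def D_def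
      by (intro abs_convex_sum_le[OF pd(1)]) blast
    show "\<bar>\<Sum>a=1..d. (\<alpha> a - \<alpha>' a) * g a\<bar> \<le> c * D"
      unfolding D_def g_def
      by (intro abs_sum_diff_mult_le_d_TV[OF pd] bounded_differences_head[OF pd(2) Suc.prems])
  qed
  finally show ?case by (simp add: D_def algebra_simps)
qed

definition disjoint_incr_family :: "nat list \<Rightarrow> nat \<Rightarrow> (nat \<Rightarrow> nat set) \<Rightarrow> bool" where
  "disjoint_incr_family w k F \<longleftrightarrow>
     (\<forall>i<k. incr_set w (F i)) \<and> (\<forall>i<k. \<forall>j<k. i \<noteq> j \<longrightarrow> F i \<inter> F j = {})"

lemma greene_eq_Max: "greene w k = Max {card (\<Union>i<k. F i) | F. disjoint_incr_family w k F}"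
  by (simp add: greene_def disjoint_incr_family_def)

lemma finite_greene_candidates: "finite {card (\<Union>i<k. F i) | F. disjoint_incr_family w k F}"
proof (rule finite_subset[of _ "{..length w}"])
  have "card (\<Union>i<k. F i) \<le> length w" if "disjoint_incr_family w k F" for F
    using that card_mono[of "{..<length w}" "\<Union>i<k. F i"]
    by (auto simp: disjoint_incr_family_def incr_set_def)
  then show "{card (\<Union>i<k. F i) | F. disjoint_incr_family w k F} \<subseteq> {..length w}"
    by auto
qed simp

lemma greene_ge: "disjoint_incr_family w k F \<Longrightarrow> card (\<Union>i<k. F i) \<le> greene w k"
  unfolding greene_eq_Max by (rule Max_ge[OF finite_greene_candidates]) blast

lemma greene_attained:
  obtains F where "disjoint_incr_family w k F" "greene w k = card (\<Union>i<k. F i)"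
proof -
  have "disjoint_incr_family w k (\<lambda>_. {})"
    by (simp add: disjoint_incr_family_def incr_set_def)
  then have "{card (\<Union>i<k. F i) | F. disjoint_incr_family w k F} \<noteq> {}" by blast
  from Max_in[OF finite_greene_candidates this] that show ?thesis
    unfolding greene_eq_Max by auto
qed

lemma greene_0: "greene w 0 = 0"
  by (metis greene_attained lessThan_0 UN_empty card.empty)

lemma greene_le_Suc: "greene w k \<le> greene w (Suc k)"
proof -
  obtain F where F: "disjoint_incr_family w k F" "greene w k = card (\<Union>i<k. F i)"
    by (rule greene_attained)
  define G where "G i = (if i < k then F i else {})" for i
  have "disjoint_incr_family w (Suc k) G"
    using F(1) by (auto simp: disjoint_incr_family_def G_def incr_set_def less_Suc_eq)
  moreover have "(\<Union>i<Suc k. G i) = (\<Union>i<k. F i)"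
    by (auto simp: G_def less_Suc_eq)
  ultimately show ?thesis using greene_ge[of w "Suc k" G] F(2) by simp
qed

lemma greene_le_list_update: "greene w k \<le> greene (w[j := b]) k + 1"
proof -
  obtain F where F: "disjoint_incr_family w k F" "greene w k = card (\<Union>i<k. F i)"
    by (rule greene_attained)
  have "disjoint_incr_family (w[j := b]) k (\<lambda>i. F i - {j})"
    using F(1) unfolding disjoint_incr_family_def incr_set_def by (auto 4 4)
  then have "card (\<Union>i<k. F i - {j}) \<le> greene (w[j := b]) k"
    by (rule greene_ge)
  moreover have "(\<Union>i<k. F i - {j}) = (\<Union>i<k. F i) - {j}" by auto
  ultimately show ?thesis
    using F diff_card_le_card_Diff[of "{j}" "\<Union>i<k. F i"] by simp
qed

lemma abs_greene_list_update_le: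
  assumes "j < length w"
  shows "\<bar>real (greene w k) - real (greene (w[j := b]) k)\<bar> \<le> 1"
proof -
  have "greene (w[j := b]) k \<le> greene ((w[j := b])[j := w ! j]) k + 1"
    by (rule greene_le_list_update)
  then have "greene (w[j := b]) k \<le> greene w k + 1"
    using assms by simp
  then show ?thesis
    using greene_le_list_update[of w k j b] by linarith
qed

lemma shRSK_eq_diff: "k \<ge> 1 \<Longrightarrow> real (shRSK w k) = real (greene w k) - real (greene w (k - 1))"
  using greene_le_Suc[of w "k - 1"] by (simp add: shRSK_def of_nat_diff)

lemma sum_shRSK: "(\<Sum>i=1..k. real (shRSK w i)) = real (greene w k)"
  by (induction k) (simp_all add: greene_0 sum.cl_ivl_Suc shRSK_eq_diff)

lemma bounded_differences_greene: "bounded_differences d n (\<lambda>w. real (greene w k)) 1"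
  by (auto simp: bounded_differences_def words_def intro: abs_greene_list_update_le)

lemma bounded_differences_shRSK:
  assumes "k \<ge> 1"
  shows "bounded_differences d n (\<lambda>w. real (shRSK w k)) 2"
  unfolding bounded_differences_def shRSK_eq_diff[OF assms]
proof (intro ballI allI impI)
  fix w j b assume "w \<in> words d n" "j < n"
  then have "j < length w" by (simp add: words_def)
  with abs_greene_list_update_le[of j w k b] abs_greene_list_update_le[of j w "k - 1" b]
  show "\<bar>real (greene w k) - real (greene w (k - 1))
      - (real (greene (w[j := b]) k) - real (greene (w[j := b]) (k - 1)))\<bar> \<le> 2"
    unfolding abs_le_iff by linarith
qed

theorem mainTheorem12:
  fixes d n k :: nat and \<alpha> \<alpha>' :: "nat \<Rightarrow> real"
  assumes "prob_dist d \<alpha>" and "prob_dist d \<alpha>'"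
    and "n \<ge> 1" and "k \<in> {1..d}"
  shows "\<bar>E_SW d n \<alpha> (\<lambda>w. (\<Sum>i=1..k. real (shRSK w i)) / real n)
           - E_SW d n \<alpha>' (\<lambda>w. (\<Sum>i=1..k. real (shRSK w i)) / real n)\<bar> \<le> d_TV d \<alpha> \<alpha>'
         \<and> \<bar>E_SW d n \<alpha> (\<lambda>w. real (shRSK w k) / real n)
           - E_SW d n \<alpha>' (\<lambda>w. real (shRSK w k) / real n)\<bar> \<le> 2 * d_TV d \<alpha> \<alpha>'"
proof -
  have n: "real n > 0" using assms(3) by simp
  have "bounded_differences d n (\<lambda>w. (\<Sum>i=1..k. real (shRSK w i)) / real n) (1 / real n)"
    unfolding sum_shRSK using bounded_differences_greene n by (rule bounded_differences_divide)
  moreover have "bounded_differences d n (\<lambda>w. real (shRSK w k) / real n) (2 / real n)"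
    using bounded_differences_shRSK assms(4) n by (intro bounded_differences_divide) auto
  ultimately show ?thesis
    using E_SW_diff_le_bounded_differences[OF assms(1,2)] n by fastforce
qed

end
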